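(* Let $n\ge2$, $m\ge1$, let $V$ be a finite-dimensional complex vector space, let $\rho\colon B_m\to\mathrm{GL}(V)$ be a representation and let $q\in\mathbf{C}^*$. Then there is a representation $\rho'\colon B_{n,m}\to\mathrm{GL}(V)$ with $\rho'(\sigma_i)=1$ for $i=1,\dots,n-1$, $\rho'(\sigma_n^2)=q$, and $\rho'(\sigma_{n+i})=\rho(\sigma_i)$ for $i=1,\dots,m-1$. Set $\rho^{(m)}=\rho'$ and, for $j=m,m-1,\dots,1$, let $\rho^{(j-1)}=(\rho^{(j)})^+$ be the representation of $B_{n,j-1}$ obtained from the representation $\rho^{(j)}$ of $B_{n,j}$ by the construction described in the context. Then $\rho^+_q:=\rho^{(0)}$ is a representation of $B_{n,0}=B_n$ on $V^{\oplus k}$, where $k=(n+m-1)(n+m-2)\cdots(n+1)n$. This gives a one-parameter family of representations $\rho^+_q$, $q\in\mathbf{C}^*$.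
   Context: For $N\ge2$ the braid group $B_N$ has generators $\sigma_1,\dots,\sigma_{N-1}$ with relations $\sigma_i\sigma_j=\sigma_j\sigma_i$ for $|i-j|>1$ and $\sigma_i\sigma_j\sigma_i=\sigma_j\sigma_i\sigma_j$ for $|i-j|=1$ ($B_1$ is trivial). Let $F_N$ be free on $g_1,\dots,g_N$; $F_N\rtimes B_N$ is generated by $F_N$ and $B_N$ subject to the additional relations $g_{i+1}\sigma_i=\sigma_i g_i$, $g_i\sigma_i=\sigma_i g_i g_{i+1}g_i^{-1}$, $g_j\sigma_i=\sigma_i g_j$ for $j\notin\{i,i+1\}$. With $R_i=\begin{bmatrix}0&g_i\\1&1-g_i\end{bmatrix}$, $\phi$ is the homomorphism from $B_N$ to invertible $N\times N$ matrices over $\mathbf{Z}[F_N\rtimes B_N]$ given by $\phi(\sigma_i)=\sigma_i\cdot\mathrm{diag}(I_{i-1},R_i,I_{N-i-1})$ (scalar $\sigma_i$ multiplying each entry on the left). $B_{n,j}\subset B_{n+j}$ is the subgroup of braids in which the first $n$ bottom endpoints are connected to the first $n$ top endpoints; it is generated by $\sigma_1,\dots,\sigma_{n-1},\sigma_n^2,\sigma_{n+1},\dots,\sigma_{n+j-1}$, and $B_{n,0}=B_n$. $B_{n,j-1}$ is a subgroup of $B_{n,j}$ by adding a straight last strand. $F_{n+j-1}$ is identified with the subgroup of $B_{n,j}$ of braids whose first $n+j-1$ strands are straight, freely generated by $g_i=(\sigma_{n+j-1}\cdots\sigma_{i+1})\sigma_i^2(\sigma_{n+j-1}\cdots\sigma_{i+1})^{-1}$,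 $i=1,\dots,n+j-1$, and the subgroup of $B_{n,j}$ generated by $B_{n,j-1}$ and $F_{n+j-1}$ is identified with the subgroup $F_{n+j-1}\rtimes B_{n,j-1}$ of $F_{n+j-1}\rtimes B_{n+j-1}$. Construction: given a representation $\tau$ of $B_{n,j}$ on $W$, $\tau^+\colon B_{n,j-1}\to\mathrm{GL}(W^{\oplus(n+j-1)})$ sends $\beta$ to the block matrix whose $(k,l)$ block is $\tau(\phi(\beta)_{kl})$, with $\tau$ restricted to $F_{n+j-1}\rtimes B_{n,j-1}$ and extended linearly to the group ring (this is a representation of $B_{n,j-1}$). *)

theory Defs
  imports "Jordan_Normal_Form.Matrix"
begin

text \<open>A braid word is a list of letters (i, True) = sigma_i and (i, False) = sigma_i^{-1}.\<close>
type_synonym bword = "(nat \<times> bool) list"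

definition bwords :: "nat \<Rightarrow> bword set" where
  "bwords N = {w. \<forall>x\<in>set w. 1 \<le> fst x \<and> fst x < N}"

inductive beq :: "nat \<Rightarrow> bword \<Rightarrow> bword \<Rightarrow> bool" for N where
  refl: "beq N u u"
| sym: "beq N u v \<Longrightarrow> beq N v u"
| trans: "beq N u v \<Longrightarrow> beq N v w \<Longrightarrow> beq N u w"
| ctxt: "beq N u v \<Longrightarrow> beq N (x @ u @ y) (x @ v @ y)"
| cancel: "1 \<le> i \<Longrightarrow> i < N \<Longrightarrow> beq N [(i, b), (i, \<not> b)] []"
| comm: "1 \<le> i \<Longrightarrow> i < N \<Longrightarrow> 1 \<le> j \<Longrightarrow> j < N \<Longrightarrow> i + 1 < j \<Longrightarrow>
          beq N [(i, True), (j, True)] [(j, True), (i, True)]"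
| braid: "1 \<le> i \<Longrightarrow> i + 1 < N \<Longrightarrow>
          beq N [(i, True), (i + 1, True), (i, True)] [(i + 1, True), (i, True), (i + 1, True)]"

definition swp :: "nat \<Rightarrow> nat \<Rightarrow> nat" where
  "swp i x = (if x = i then i + 1 else if x = i + 1 then i else x)"

fun bperm :: "bword \<Rightarrow> nat \<Rightarrow> nat" where
  "bperm [] = id"
| "bperm (x # w) = swp (fst x) \<circ> bperm w"

text \<open>B_{n,j} inside B_{n+j}: braids connecting the first n bottom endpoints to the first n top
  endpoints. B_{n,j-1} sits in B_{n,j} by adding a straight last strand, i.e. as the same words.\<close>
definition Bnj :: "nat \<Rightarrow> nat \<Rightarrow> bword set" where
  "Bnj n j = {w \<in> bwords (n + j). bperm w ` {1..n} = {1..n}}"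

text \<open>A representation of the group (of classes of words in the subgroup G of B_N) on C^d:
  a multiplicative map into d x d complex matrices, constant on braid classes.\<close>
definition is_rep :: "bword set \<Rightarrow> nat \<Rightarrow> nat \<Rightarrow> (bword \<Rightarrow> complex mat) \<Rightarrow> bool" where
  "is_rep G N d r \<longleftrightarrow>
     (\<forall>w\<in>G. r w \<in> carrier_mat d d) \<and> r [] = one_mat d \<and>
     (\<forall>u\<in>G. \<forall>v\<in>G. r (u @ v) = r u * r v) \<and>
     (\<forall>u\<in>G. \<forall>v\<in>G. beq N u v \<longrightarrow> r u = r v)"

text \<open>Elements of the group ring, as formal integer combinations of words (words of
  F_N x| B_N already mapped into B_{N+1} via the identification of the context).\<close>
type_synonym gring = "(int \<times> bword) list"

definition gr_mult :: "gring \<Rightarrow> gring \<Rightarrow> gring" where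
  "gr_mult xs ys = concat (map (\<lambda>(c, u). map (\<lambda>(e, v). (c * e, u @ v)) ys) xs)"

definition gr_lmul :: "bword \<Rightarrow> gring \<Rightarrow> gring" where
  "gr_lmul u xs = map (\<lambda>(c, v). (c, u @ v)) xs"

definition gr_rmul :: "gring \<Rightarrow> bword \<Rightarrow> gring" where
  "gr_rmul xs u = map (\<lambda>(c, v). (c, v @ u)) xs"

type_synonym grmat = "nat \<Rightarrow> nat \<Rightarrow> gring"

definition gm_mult :: "nat \<Rightarrow> grmat \<Rightarrow> grmat \<Rightarrow> grmat" where
  "gm_mult N A B k l = concat (map (\<lambda>p. gr_mult (A k p) (B p l)) [0..<N])"

definition gm_one :: grmat where
  "gm_one k l = (if k = l then [(1, [])] else [])"

definition gword :: "nat \<Rightarrow> nat \<Rightarrow> bool \<Rightarrow> bword" where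
  "gword N i b = map (\<lambda>k. (k, True)) (rev [i + 1..<N + 1]) @ [(i, b), (i, b)]
                 @ map (\<lambda>k. (k, False)) [i + 1..<N + 1]"

text \<open>phi(sigma_i) = sigma_i . diag(I, R_i, I) with R_i = [[0, g_i], [1, 1 - g_i]];
  phi(sigma_i^{-1}) = phi(sigma_i)^{-1} = diag(I, R_i^{-1}, I) . sigma_i^{-1} with
  R_i^{-1} = [[1 - g_i^{-1}, 1], [g_i^{-1}, 0]].  Rows/columns are 0-based, so R_i sits at
  positions i-1, i.\<close>
definition Dmat :: "nat \<Rightarrow> nat \<Rightarrow> grmat" where
  "Dmat N i k l =
     (if k = i - 1 \<and> l = i - 1 then []
      else if k = i - 1 \<and> l = i then [(1, gword N i True)]
      else if k = i \<and> l = i - 1 then [(1, [])]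
      else if k = i \<and> l = i then [(1, []), (-1, gword N i True)]
      else if k = l then [(1, [])] else [])"

definition Dinv :: "nat \<Rightarrow> nat \<Rightarrow> grmat" where
  "Dinv N i k l =
     (if k = i - 1 \<and> l = i - 1 then [(1, []), (-1, gword N i False)]
      else if k = i - 1 \<and> l = i then [(1, [])]
      else if k = i \<and> l = i - 1 then [(1, gword N i False)]
      else if k = i \<and> l = i then []
      else if k = l then [(1, [])] else [])"

definition phi_gen :: "nat \<Rightarrow> nat \<times> bool \<Rightarrow> grmat" where
  "phi_gen N x k l =
     (if snd x then gr_lmul [(fst x, True)] (Dmat N (fst x) k l)
      else gr_rmul (Dinv N (fst x) k l) [(fst x, False)])"

fun phi :: "nat \<Rightarrow> bword \<Rightarrow> grmat" where
  "phi N [] = gm_one"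
| "phi N (x # w) = gm_mult N (phi_gen N x) (phi N w)"

definition tau_lin :: "nat \<Rightarrow> (bword \<Rightarrow> complex mat) \<Rightarrow> gring \<Rightarrow> complex mat" where
  "tau_lin d \<tau> xs = foldr (\<lambda>(c, w) acc. smult_mat (of_int c) (\<tau> w) + acc) xs (zero_mat d d)"

text \<open>tau a representation of B_{n,j} on C^d, N = n + j - 1; tau^+(beta) is the N x N block
  matrix (blocks of size d) whose (k,l) block is tau(phi(beta)_{kl}).\<close>
definition rep_plus :: "nat \<Rightarrow> nat \<Rightarrow> (bword \<Rightarrow> complex mat) \<Rightarrow> bword \<Rightarrow> complex mat" where
  "rep_plus N d \<tau> \<beta> =
     mat (N * d) (N * d)
       (\<lambda>(a, b). tau_lin d \<tau> (phi N \<beta> (a div d) (b div d)) $$ (a mod d, b mod d))"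

text \<open>Iterating: starting from a representation of B_{n,j} on C^d, apply the construction j
  times; returns (dimension, representation of B_{n,0}).\<close>
fun iter_plus :: "nat \<Rightarrow> nat \<Rightarrow> (bword \<Rightarrow> complex mat) \<Rightarrow> nat \<Rightarrow> nat \<times> (bword \<Rightarrow> complex mat)" where
  "iter_plus n d \<tau> 0 = (d, \<tau>)"
| "iter_plus n d \<tau> (Suc j) = iter_plus n ((n + j) * d) (rep_plus (n + j) d \<tau>) j"

definition rho_prime_props ::
  "nat \<Rightarrow> nat \<Rightarrow> nat \<Rightarrow> complex \<Rightarrow> (bword \<Rightarrow> complex mat) \<Rightarrow> (bword \<Rightarrow> complex mat) \<Rightarrow> bool" where
  "rho_prime_props n m d q \<rho> \<rho>' \<longleftrightarrow>
     is_rep (Bnj n m) (n + m) d \<rho>' \<and>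
     (\<forall>i\<in>{1..<n}. \<rho>' [(i, True)] = one_mat d) \<and>
     \<rho>' [(n, True), (n, True)] = smult_mat q (one_mat d) \<and>
     (\<forall>i\<in>{1..<m}. \<rho>' [(n + i, True)] = \<rho> [(i, True)])"

end

theory Submission
  imports Defs
begin

text \<open>
  The representation rho' forgets the first n strands: a braid in B_{n,m} keeps its first n
  strands among the first n positions, so deleting them leaves a braid on the remaining m
  strands, to which rho is applied; the result is scaled by sqrt q raised to the signed number
  of crossings between a deleted and a kept strand, which is 2 for sigma_n^2.

  That tau^+ is again a representation is a statement about phi: after applying any linear
  functional on the group ring that is constant on braid classes, phi is multiplicative and
  respects the defining relations of the braid group. Entry by entry, these relations reduce
  to the identities g_{i+1} sigma_i = sigma_i g_i, g_i sigma_i = sigma_i g_i g_{i+1} g_i^{-1}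
  and g_k sigma_l = sigma_l g_k (l not in {k-1, k}) satisfied by the words g_i in B_{N+1}.
  Each step multiplies the dimension by n+j-1, whence the product (n+m-1)...n.
\<close>

section \<open>Braid words\<close>

declare beq.trans [trans]

lemma beq_append_left: "beq M u v \<Longrightarrow> beq M (x @ u) (x @ v)"
  using beq.ctxt[of M u v x "[]"] by simp

lemma beq_append_right: "beq M u v \<Longrightarrow> beq M (u @ y) (v @ y)"
  using beq.ctxt[of M u v "[]" y] by simp

definition inv_letter :: "nat \<times> bool \<Rightarrow> nat \<times> bool" where
  "inv_letter x = (fst x, \<not> snd x)"

definition inv_word :: "bword \<Rightarrow> bword" where
  "inv_word w = rev (map inv_letter w)"

lemma inv_letter_simps [simp]: "inv_letter (i, b) = (i, \<not> b)" "inv_letter (inv_letter x) = x"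
  by (auto simp: inv_letter_def)

lemma inv_word_simps [simp]:
  "inv_word [] = []" "inv_word (a # w) = inv_word w @ [inv_letter a]"
  "inv_word (u @ v) = inv_word v @ inv_word u" "inv_word (inv_word w) = w"
  by (auto simp: inv_word_def rev_map[symmetric] comp_def inv_letter_def)

lemma bwords_simps [simp]:
  "[] \<in> bwords M" "a # w \<in> bwords M \<longleftrightarrow> 1 \<le> fst a \<and> fst a < M \<and> w \<in> bwords M"
  "u @ v \<in> bwords M \<longleftrightarrow> u \<in> bwords M \<and> v \<in> bwords M"
  by (auto simp: bwords_def)

lemma inv_word_bwords [simp]: "inv_word w \<in> bwords M \<longleftrightarrow> w \<in> bwords M"
  by (induction w) (auto simp: inv_letter_def)

lemma beq_cancel_letter: "1 \<le> fst a \<Longrightarrow> fst a < M \<Longrightarrow> beq M [a, inv_letter a] []"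
  by (cases a) (auto intro: beq.cancel)

lemma beq_append_inv_word: "w \<in> bwords M \<Longrightarrow> beq M (w @ inv_word w) []"
proof (induction w)
  case Nil
  show ?case by (simp add: beq.refl)
next
  case (Cons a w)
  have "beq M (a # w @ inv_word w @ [inv_letter a]) ([a] @ [] @ [inv_letter a])"
    using beq.ctxt[OF Cons.IH, of "[a]" "[inv_letter a]"] Cons.prems by simp
  also have "beq M ([a] @ [] @ [inv_letter a]) []"
    using beq_cancel_letter[of a M] Cons.prems by simp
  finally show ?case by simp
qed

lemma beq_inv_word_append: "w \<in> bwords M \<Longrightarrow> beq M (inv_word w @ w) []"
  using beq_append_inv_word[of "inv_word w" M] by simp

lemma beq_conjugate:
  assumes "beq M (p @ u) (v @ p)" "p \<in> bwords M"
  shows "beq M (inv_word p @ v) (u @ inv_word p)"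
proof -
  have "beq M (inv_word p @ v) (inv_word p @ v @ p @ inv_word p)"
    using beq.ctxt[OF beq.sym[OF beq_append_inv_word[OF assms(2)]], of "inv_word p @ v" "[]"]
    by simp
  also have "beq M \<dots> (inv_word p @ p @ u @ inv_word p)"
    using beq.ctxt[OF beq.sym[OF assms(1)], of "inv_word p" "inv_word p"] by simp
  also have "beq M \<dots> (u @ inv_word p)"
    using beq.ctxt[OF beq_inv_word_append[OF assms(2)], of "[]" "u @ inv_word p"] by simp
  finally show ?thesis .
qed

lemma beq_commute_inv_letter:
  assumes "beq M [x, y] [y, x]" "1 \<le> fst x" "fst x < M"
  shows "beq M [inv_letter x, y] [y, inv_letter x]"
proof -
  have "beq M [inv_letter x, y] [inv_letter x, y, x, inv_letter x]"
    using beq_append_left[OF beq.sym[OF beq_cancel_letter[of x M]], of "[inv_letter x, y]"] assms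
    by simp
  also have "beq M \<dots> [inv_letter x, x, y, inv_letter x]"
    using beq.ctxt[OF beq.sym[OF assms(1)], of "[inv_letter x]" "[inv_letter x]"] by simp
  also have "beq M \<dots> [y, inv_letter x]"
    using beq_append_right[OF beq_cancel_letter[of "inv_letter x" M], of "[y, inv_letter x]"] assms
    by (simp add: inv_letter_def)
  finally show ?thesis .
qed

lemma beq_far_commute:
  assumes "1 \<le> i" "i < M" "1 \<le> j" "j < M" "i + 1 < j \<or> j + 1 < i"
  shows "beq M [(i, b), (j, c)] [(j, c), (i, b)]"
proof -
  have pos: "beq M [(k, True), (l, True)] [(l, True), (k, True)]"
    if "(k, l) = (i, j) \<or> (k, l) = (j, i)" for k l
  proof -
    have "beq M [(i, True), (j, True)] [(j, True), (i, True)]"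
      using assms(5)
    proof
      assume "i + 1 < j"
      then show ?thesis using assms by (intro beq.comm) auto
    next
      assume "j + 1 < i"
      then show ?thesis using assms by (intro beq.sym[OF beq.comm]) auto
    qed
    then show ?thesis using that beq.sym by blast
  qed
  have left: "beq M [(k, b'), (l, True)] [(l, True), (k, b')]"
    if "(k, l) = (i, j) \<or> (k, l) = (j, i)" for k l b'
    using pos[OF that] beq_commute_inv_letter[OF pos[OF that]] that assms by (cases b') auto
  have "beq M [(i, True), (j, c)] [(j, c), (i, True)]"
    using left[of j i c] by (auto intro: beq.sym)
  then show ?thesis
    using beq_commute_inv_letter[of M "(i, True)" "(j, c)"] assms by (cases b) auto
qed

lemma beq_move_far_letter:
  assumes "1 \<le> l" "l < M"
    and "\<forall>z\<in>set w. 1 \<le> fst z \<and> fst z < M \<and> (l + 1 < fst z \<or> fst z + 1 < l)"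
  shows "beq M (w @ [(l, b)]) ((l, b) # w)"
  using assms(3)
proof (induction w)
  case Nil
  show ?case by (simp add: beq.refl)
next
  case (Cons z w)
  have zl: "beq M [z, (l, b)] [(l, b), z]"
    using beq_far_commute[of "fst z" M l "snd z" b] assms(1,2) Cons.prems by auto
  have "beq M (z # w @ [(l, b)]) (z # (l, b) # w)"
    using beq_append_left[OF Cons.IH, of "[z]"] Cons.prems by simp
  also have "beq M \<dots> ((l, b) # z # w)"
    using beq_append_right[OF zl, of w] by simp
  finally show ?case by simp
qed

lemma beq_insert_cancel:
  "1 \<le> i \<Longrightarrow> i < M \<Longrightarrow> beq M (x @ y) (x @ (i, b) # (i, \<not> b) # y)"
  using beq.ctxt[OF beq.sym[OF beq.cancel[of i M b]], of x y] by simp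

lemma beq_delete_cancel:
  "1 \<le> i \<Longrightarrow> i < M \<Longrightarrow> beq M (x @ (i, b) # (i, \<not> b) # y) (x @ y)"
  using beq.ctxt[OF beq.cancel[of i M b], of x y] by simp

lemma beq_braid_in:
  "1 \<le> i \<Longrightarrow> Suc i < M \<Longrightarrow>
   beq M (x @ (i, True) # (Suc i, True) # (i, True) # y)
         (x @ (Suc i, True) # (i, True) # (Suc i, True) # y)"
  using beq.ctxt[OF beq.braid[of i M], of x y] by simp

lemma beq_braid_in_sym:
  "1 \<le> i \<Longrightarrow> Suc i < M \<Longrightarrow>
   beq M (x @ (Suc i, True) # (i, True) # (Suc i, True) # y)
         (x @ (i, True) # (Suc i, True) # (i, True) # y)"
  using beq.ctxt[OF beq.sym[OF beq.braid[of i M]], of x y] by simp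

section \<open>The words g_i\<close>

definition gconj :: "nat \<Rightarrow> nat \<Rightarrow> bword" where
  "gconj N k = map (\<lambda>m. (m, True)) (rev [k + 1..<N + 1])"

lemma gword_gconj: "gword N i b = gconj N i @ [(i, b), (i, b)] @ inv_word (gconj N i)"
  by (simp add: gword_def gconj_def inv_word_def rev_map comp_def)

lemma gword_False: "gword N i False = inv_word (gword N i True)"
  by (simp add: gword_gconj)

lemma gconj_bwords: "gconj N k \<in> bwords (Suc N)"
  by (auto simp: gconj_def bwords_def)

lemma gword_bwords: "1 \<le> i \<Longrightarrow> i \<le> N \<Longrightarrow> gword N i b \<in> bwords (Suc N)"
  by (auto simp: gword_gconj gconj_bwords)

lemma set_gconj: "set (gconj N k) = {(m, True) | m. k < m \<and> m \<le> N}"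
  by (auto simp: gconj_def)

lemma gconj_snoc: "k < N \<Longrightarrow> gconj N k = gconj N (Suc k) @ [(Suc k, True)]"
  by (simp add: gconj_def upt_rec)

lemma gconj_split:
  assumes "k + 1 \<le> l" "l + 1 \<le> N"
  shows "gconj N k = gconj N (Suc l) @ [(Suc l, True), (l, True)] @ map (\<lambda>m. (m, True)) (rev [k + 1..<l])"
proof -
  have "[k + 1..<N + 1] = [k + 1..<l] @ [l..<N + 1]"
    using upt_add_eq_append[of "k + 1" l "N + 1 - l"] assms by simp
  moreover have "[l..<N + 1] = l # Suc l # [Suc (Suc l)..<N + 1]"
    using assms by (simp add: upt_conv_Cons)
  ultimately show ?thesis by (simp add: gconj_def)
qed

lemma gconj_shift:
  assumes "k + 1 \<le> l" "l + 1 \<le> N"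
  shows "beq (Suc N) (gconj N k @ [(Suc l, True)]) ((l, True) # gconj N k)"
proof -
  define P where "P = gconj N (Suc l)"
  define Q where "Q = map (\<lambda>m. (m, True)) (rev [k + 1..<l])"
  have decomp: "gconj N k = P @ [(Suc l, True), (l, True)] @ Q"
    using gconj_split[OF assms] by (simp add: P_def Q_def)
  have Q_move: "beq (Suc N) (Q @ [(Suc l, True)]) ((Suc l, True) # Q)"
    by (rule beq_move_far_letter) (use assms in \<open>auto simp: Q_def\<close>)
  have P_move: "beq (Suc N) (P @ [(l, True)]) ((l, True) # P)"
    by (rule beq_move_far_letter) (use assms in \<open>auto simp: P_def set_gconj\<close>)
  have "beq (Suc N) (gconj N k @ [(Suc l, True)])
          ((P @ [(Suc l, True), (l, True)]) @ ((Suc l, True) # Q) @ [])"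
    using beq.ctxt[OF Q_move, of "P @ [(Suc l, True), (l, True)]" "[]"] by (simp add: decomp)
  also have "beq (Suc N) \<dots> ((P @ [(l, True)]) @ [(Suc l, True), (l, True)] @ Q)"
    using beq_braid_in_sym[of l "Suc N" P Q] assms by simp
  also have "beq (Suc N) \<dots> ((l, True) # gconj N k)"
    using beq_append_right[OF P_move, of "[(Suc l, True), (l, True)] @ Q"] by (simp add: decomp)
  finally show ?thesis .
qed

lemma beq_gword_Suc_sigma_core:
  assumes "1 \<le> i" "Suc i < M"
  shows "beq M [(Suc i, True), (Suc i, True), (i, True)]
               [(i, True), (Suc i, True), (i, True), (i, True), (Suc i, False)]"
proof -
  let ?A = "(i, True)" and ?B = "(Suc i, True)" and ?b = "(Suc i, False)"
  have "beq M [?B, ?B, ?A] [?B, ?B, ?A, ?B, ?b]"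
    using beq_insert_cancel[of "Suc i" M "[?B, ?B, ?A]" "[]" True] assms by simp
  also have "beq M \<dots> [?B, ?A, ?B, ?A, ?b]"
    using beq_braid_in_sym[of i M "[?B]" "[?b]"] assms by simp
  also have "beq M \<dots> [?A, ?B, ?A, ?A, ?b]"
    using beq_braid_in_sym[of i M "[]" "[?A, ?b]"] assms by simp
  finally show ?thesis .
qed

lemma beq_gword_sigma_core:
  assumes "1 \<le> i" "Suc i < M"
  shows "beq M [(Suc i, True), (i, True), (i, True), (Suc i, False), (i, True)]
               [(i, True), (Suc i, True), (i, True), (i, True), (Suc i, True), (Suc i, True),
                (i, False), (i, False), (Suc i, False)]"
proof -
  let ?A = "(i, True)" and ?a = "(i, False)" and ?B = "(Suc i, True)" and ?b = "(Suc i, False)"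
  have "beq M [?B, ?A, ?A, ?b, ?A] [?B, ?A, ?A, ?b, ?A, ?B, ?b]"
    using beq_insert_cancel[of "Suc i" M "[?B, ?A, ?A, ?b, ?A]" "[]" True] assms by simp
  also have "beq M \<dots> [?B, ?A, ?A, ?b, ?A, ?B, ?A, ?a, ?b]"
    using beq_insert_cancel[of i M "[?B, ?A, ?A, ?b, ?A, ?B]" "[?b]" True] assms by simp
  also have "beq M \<dots> [?B, ?A, ?A, ?b, ?B, ?A, ?B, ?a, ?b]"
    using beq_braid_in[of i M "[?B, ?A, ?A, ?b]" "[?a, ?b]"] assms by simp
  also have "beq M \<dots> [?B, ?A, ?A, ?A, ?B, ?a, ?b]"
    using beq_delete_cancel[of "Suc i" M "[?B, ?A, ?A]" False "[?A, ?B, ?a, ?b]"] assms by simp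
  also have "beq M \<dots> [?B, ?A, ?A, ?A, ?B, ?A, ?a, ?a, ?b]"
    using beq_insert_cancel[of i M "[?B, ?A, ?A, ?A, ?B]" "[?a, ?b]" True] assms by simp
  also have "beq M \<dots> [?B, ?A, ?A, ?B, ?A, ?B, ?a, ?a, ?b]"
    using beq_braid_in[of i M "[?B, ?A, ?A]" "[?a, ?a, ?b]"] assms by simp
  also have "beq M \<dots> [?B, ?A, ?B, ?A, ?B, ?B, ?a, ?a, ?b]"
    using beq_braid_in[of i M "[?B, ?A]" "[?B, ?a, ?a, ?b]"] assms by simp
  also have "beq M \<dots> [?A, ?B, ?A, ?A, ?B, ?B, ?a, ?a, ?b]"
    using beq_braid_in_sym[of i M "[]" "[?A, ?B, ?B, ?a, ?a, ?b]"] assms by simp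
  finally show ?thesis .
qed

lemma beq_gword_sigma_far:
  assumes k: "1 \<le> k" "k \<le> N" and l: "1 \<le> l" "l < N" and kl: "l + 1 < k \<or> k + 1 \<le> l"
  shows "beq (Suc N) (gword N k True @ [(l, True)]) ((l, True) # gword N k True)"
  using kl
proof
  assume "l + 1 < k"
  then show ?thesis
    by (intro beq_move_far_letter) (use k l in \<open>auto simp: gword_gconj set_gconj inv_word_def\<close>)
next
  assume lk: "k + 1 \<le> l"
  define C where "C = gconj N k"
  have shift: "beq (Suc N) (C @ [(Suc l, True)]) ([(l, True)] @ C)"
    using gconj_shift[of k l N] lk l by (simp add: C_def)
  have shift_inv: "beq (Suc N) (inv_word C @ [(l, True)]) ([(Suc l, True)] @ inv_word C)"
    by (rule beq_conjugate[OF shift]) (simp add: C_def gconj_bwords)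
  have square: "beq (Suc N) ([(k, True), (k, True)] @ [(Suc l, True)]) ((Suc l, True) # [(k, True), (k, True)])"
    by (rule beq_move_far_letter) (use lk k l in auto)
  have "beq (Suc N) (gword N k True @ [(l, True)]) ((C @ [(k, True), (k, True)]) @ ([(Suc l, True)] @ inv_word C) @ [])"
    using beq.ctxt[OF shift_inv, of "C @ [(k, True), (k, True)]" "[]"] by (simp add: gword_gconj C_def)
  also have "beq (Suc N) \<dots> (C @ ((Suc l, True) # [(k, True), (k, True)]) @ inv_word C)"
    using beq.ctxt[OF square, of C "inv_word C"] by simp
  also have "beq (Suc N) \<dots> ([] @ ([(l, True)] @ C) @ [(k, True), (k, True)] @ inv_word C)"
    using beq.ctxt[OF shift, of "[]" "[(k, True), (k, True)] @ inv_word C"] by simp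
  finally show ?thesis by (simp add: gword_gconj C_def)
qed

lemma beq_gword_Suc_sigma:
  assumes i: "1 \<le> i" "Suc i \<le> N"
  shows "beq (Suc N) (gword N (Suc i) True @ [(i, True)]) ((i, True) # gword N i True)"
proof -
  define P where "P = gconj N (Suc i)"
  have gconj_i: "gconj N i = P @ [(Suc i, True)]"
    using gconj_snoc[of i N] i by (simp add: P_def)
  have past_inv: "beq (Suc N) (inv_word P @ [(i, True)]) ((i, True) # inv_word P)"
    by (rule beq_move_far_letter) (use i in \<open>auto simp: P_def set_gconj inv_word_def\<close>)
  have past: "beq (Suc N) (P @ [(i, True)]) ((i, True) # P)"
    by (rule beq_move_far_letter) (use i in \<open>auto simp: P_def set_gconj\<close>)
  have "beq (Suc N) (gword N (Suc i) True @ [(i, True)])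
          (P @ [(Suc i, True), (Suc i, True), (i, True)] @ inv_word P)"
    using beq.ctxt[OF past_inv, of "P @ [(Suc i, True), (Suc i, True)]" "[]"]
    by (simp add: gword_gconj P_def)
  also have "beq (Suc N) \<dots> (P @ [(i, True), (Suc i, True), (i, True), (i, True), (Suc i, False)] @ inv_word P)"
    by (rule beq.ctxt[OF beq_gword_Suc_sigma_core]) (use i in auto)
  also have "beq (Suc N) \<dots> ((i, True) # P @ [(Suc i, True), (i, True), (i, True), (Suc i, False)] @ inv_word P)"
    using beq.ctxt[OF past, of "[]" "[(Suc i, True), (i, True), (i, True), (Suc i, False)] @ inv_word P"]
    by simp
  finally show ?thesis by (simp add: gword_gconj gconj_i)
qed

lemma beq_gword_sigma:
  assumes i: "1 \<le> i" "Suc i \<le> N"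
  shows "beq (Suc N) (gword N i True @ [(i, True)])
          ((i, True) # gword N i True @ gword N (Suc i) True @ gword N i False)"
proof -
  define P where "P = gconj N (Suc i)"
  have gconj_i: "gconj N i = P @ [(Suc i, True)]"
    using gconj_snoc[of i N] i by (simp add: P_def)
  have past_inv: "beq (Suc N) (inv_word P @ [(i, True)]) ((i, True) # inv_word P)"
    by (rule beq_move_far_letter) (use i in \<open>auto simp: P_def set_gconj inv_word_def\<close>)
  have past: "beq (Suc N) (P @ [(i, True)]) ((i, True) # P)"
    by (rule beq_move_far_letter) (use i in \<open>auto simp: P_def set_gconj\<close>)
  have unit: "beq (Suc N) [] (inv_word P @ P)"
    by (rule beq.sym, rule beq_inv_word_append) (simp add: P_def gconj_bwords)
  let ?A = "(i, True)" and ?a = "(i, False)" and ?B = "(Suc i, True)" and ?b = "(Suc i, False)"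
  have "beq (Suc N) (gword N i True @ [?A]) (P @ [?B, ?A, ?A, ?b, ?A] @ inv_word P)"
    using beq.ctxt[OF past_inv, of "P @ [?B, ?A, ?A, ?b]" "[]"] by (simp add: gword_gconj gconj_i)
  also have "beq (Suc N) \<dots> (P @ [?A, ?B, ?A, ?A, ?B, ?B, ?a, ?a, ?b] @ inv_word P)"
    by (rule beq.ctxt[OF beq_gword_sigma_core]) (use i in auto)
  also have "beq (Suc N) \<dots> ((P @ [?A, ?B, ?A, ?A, ?b]) @ [] @ [?B, ?B, ?B, ?a, ?a, ?b] @ inv_word P)"
    using beq_insert_cancel[of "Suc i" "Suc N" "P @ [?A, ?B, ?A, ?A]" "[?B, ?B, ?a, ?a, ?b] @ inv_word P" False] i
    by simp
  also have "beq (Suc N) \<dots>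
      ((P @ [?A, ?B, ?A, ?A, ?b] @ inv_word P @ P @ [?B, ?B]) @ [] @ [?B, ?a, ?a, ?b] @ inv_word P)"
    using beq.ctxt[OF unit, of "P @ [?A, ?B, ?A, ?A, ?b]" "[?B, ?B, ?B, ?a, ?a, ?b] @ inv_word P"] by simp
  also have "beq (Suc N) \<dots>
      ((P @ [?A]) @ [?B, ?A, ?A, ?b] @ inv_word P @ P @ [?B, ?B] @ inv_word P @ P @ [?B, ?a, ?a, ?b] @ inv_word P)"
    using beq.ctxt[OF unit, of "P @ [?A, ?B, ?A, ?A, ?b] @ inv_word P @ P @ [?B, ?B]" "[?B, ?a, ?a, ?b] @ inv_word P"]
    by simp
  also have "beq (Suc N) \<dots>
      ((?A # P) @ [?B, ?A, ?A, ?b] @ inv_word P @ P @ [?B, ?B] @ inv_word P @ P @ [?B, ?a, ?a, ?b] @ inv_word P)"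
    using beq_append_right[OF past] by simp
  finally show ?thesis by (simp add: gword_gconj gconj_i P_def[symmetric])
qed

section \<open>Braid-invariant functionals on the group ring\<close>

definition gr_eval :: "(bword \<Rightarrow> complex) \<Rightarrow> gring \<Rightarrow> complex" where
  "gr_eval f A = sum_list (map (\<lambda>(c, w). of_int c * f w) A)"

lemma gr_eval_simps [simp]:
  "gr_eval f [] = 0" "gr_eval f ((c, w) # A) = of_int c * f w + gr_eval f A"
  "gr_eval f (A @ B) = gr_eval f A + gr_eval f B"
  by (auto simp: gr_eval_def)

lemma gr_eval_cong:
  "(\<And>c w. (c, w) \<in> set A \<Longrightarrow> f w = g w) \<Longrightarrow> gr_eval f A = gr_eval g A"
proof (induction A)
  case (Cons x A)
  obtain c w where x: "x = (c, w)" by (cases x)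
  have "f w = g w" "gr_eval f A = gr_eval g A"
    using Cons x by auto
  then show ?case by (simp add: x)
qed simp

lemma gr_eval_concat: "gr_eval f (concat xs) = sum_list (map (gr_eval f) xs)"
  by (induction xs) auto

lemma gr_eval_gr_mult: "gr_eval f (gr_mult A B) = gr_eval (\<lambda>u. gr_eval (\<lambda>v. f (u @ v)) B) A"
proof -
  have row: "gr_eval f (map (\<lambda>(e, v). (c * e, u @ v)) B) = of_int c * gr_eval (\<lambda>v. f (u @ v)) B"
    for c u
    by (induction B) (auto simp: algebra_simps)
  show ?thesis by (induction A) (auto simp: gr_mult_def row)
qed

lemma gr_eval_gr_lmul: "gr_eval f (gr_lmul u A) = gr_eval (\<lambda>v. f (u @ v)) A"
  by (induction A) (auto simp: gr_lmul_def)

lemma gr_eval_gr_rmul: "gr_eval f (gr_rmul A u) = gr_eval (\<lambda>v. f (v @ u)) A"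
  by (induction A) (auto simp: gr_rmul_def)

lemma gr_eval_sum: "gr_eval (\<lambda>a. \<Sum>q\<in>S. F q a) A = (\<Sum>q\<in>S. gr_eval (F q) A)"
  by (induction A) (auto simp: sum_distrib_left sum.distrib)

lemma gr_eval_mult_left: "gr_eval (\<lambda>w. c * g w) A = c * gr_eval g A"
  by (induction A) (auto simp: algebra_simps)

lemma gr_eval_mult_right: "gr_eval (\<lambda>w. g w * c) A = gr_eval g A * c"
  by (induction A) (auto simp: algebra_simps)

lemma gr_eval_gm_mult:
  "gr_eval f (gm_mult N A B k l) = (\<Sum>p<N. gr_eval (\<lambda>a. gr_eval (\<lambda>b. f (a @ b)) (B p l)) (A k p))"
  by (simp add: gm_mult_def gr_eval_concat comp_def gr_eval_gr_mult atLeast0LessThan[symmetric]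
      sum_list_distinct_conv_sum_set)

lemma gr_eval_gm_one: "gr_eval f (gm_one k l) = of_bool (k = l) * f []"
  by (simp add: gm_one_def)

lemma gr_eval_gm_mult_assoc:
  "gr_eval f (gm_mult N A (gm_mult N B C) k l) = gr_eval f (gm_mult N (gm_mult N A B) C k l)"
proof -
  have "gr_eval f (gm_mult N A (gm_mult N B C) k l) =
     (\<Sum>p<N. \<Sum>q<N. gr_eval (\<lambda>a. gr_eval (\<lambda>b. gr_eval (\<lambda>c. f (a @ b @ c)) (C q l)) (B p q)) (A k p))"
    by (simp add: gr_eval_gm_mult gr_eval_sum)
  also have "\<dots> =
     (\<Sum>q<N. \<Sum>p<N. gr_eval (\<lambda>a. gr_eval (\<lambda>b. gr_eval (\<lambda>c. f (a @ b @ c)) (C q l)) (B p q)) (A k p))"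
    by (rule sum.swap)
  also have "\<dots> = gr_eval f (gm_mult N (gm_mult N A B) C k l)"
    by (simp add: gr_eval_gm_mult gr_eval_sum)
  finally show ?thesis .
qed

definition braid_invariant :: "nat \<Rightarrow> (bword \<Rightarrow> complex) \<Rightarrow> bool" where
  "braid_invariant M f \<longleftrightarrow> (\<forall>u v. beq M u v \<longrightarrow> f u = f v)"

lemma braid_invariantD: "braid_invariant M f \<Longrightarrow> beq M u v \<Longrightarrow> f u = f v"
  by (simp add: braid_invariant_def)

lemma braid_invariant_append_left: "braid_invariant M f \<Longrightarrow> braid_invariant M (\<lambda>v. f (u @ v))"
  unfolding braid_invariant_def using beq_append_left by blast

lemma braid_invariant_gr_eval:
  assumes "braid_invariant M f"
  shows "braid_invariant M (\<lambda>a. gr_eval (\<lambda>b. f (a @ b)) B)"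
  unfolding braid_invariant_def
proof (intro allI impI)
  fix u v assume "beq M u v"
  then have "\<And>b. f (u @ b) = f (v @ b)"
    using assms beq_append_right unfolding braid_invariant_def by blast
  then show "gr_eval (\<lambda>b. f (u @ b)) B = gr_eval (\<lambda>b. f (v @ b)) B"
    by (intro gr_eval_cong)
qed

text \<open>
  Two N x N matrices over the group ring are identified when every braid-invariant
  functional takes the same values on corresponding entries; this is all that matters after
  applying a representation, and avoids constructing the group ring modulo braid relations.
\<close>
definition gm_equiv :: "nat \<Rightarrow> nat \<Rightarrow> grmat \<Rightarrow> grmat \<Rightarrow> bool" where
  "gm_equiv M N A B \<longleftrightarrow>
     (\<forall>f. braid_invariant M f \<longrightarrow> (\<forall>k<N. \<forall>l<N. gr_eval f (A k l) = gr_eval f (B k l)))"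

lemma gm_equiv_refl: "gm_equiv M N A A"
  by (simp add: gm_equiv_def)

lemma gm_equiv_sym: "gm_equiv M N A B \<Longrightarrow> gm_equiv M N B A"
  by (simp add: gm_equiv_def)

lemma gm_equiv_trans [trans]: "gm_equiv M N A B \<Longrightarrow> gm_equiv M N B C \<Longrightarrow> gm_equiv M N A C"
  by (simp add: gm_equiv_def)

lemma gm_equivD:
  "gm_equiv M N A B \<Longrightarrow> braid_invariant M f \<Longrightarrow> k < N \<Longrightarrow> l < N \<Longrightarrow>
   gr_eval f (A k l) = gr_eval f (B k l)"
  by (simp add: gm_equiv_def)

lemma gm_equiv_mult:
  assumes "gm_equiv M N A A'" "gm_equiv M N B B'"
  shows "gm_equiv M N (gm_mult N A B) (gm_mult N A' B')"
  unfolding gm_equiv_def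
proof (intro allI impI)
  fix f k l assume f: "braid_invariant M f" and kl: "k < N" "l < N"
  have "gr_eval f (gm_mult N A B k l) = (\<Sum>p<N. gr_eval (\<lambda>a. gr_eval (\<lambda>b. f (a @ b)) (B p l)) (A k p))"
    by (rule gr_eval_gm_mult)
  also have "\<dots> = (\<Sum>p<N. gr_eval (\<lambda>a. gr_eval (\<lambda>b. f (a @ b)) (B p l)) (A' k p))"
    using gm_equivD[OF assms(1) braid_invariant_gr_eval[OF f] kl(1)] by simp
  also have "\<dots> = (\<Sum>p<N. gr_eval (\<lambda>a. gr_eval (\<lambda>b. f (a @ b)) (B' p l)) (A' k p))"
    using gm_equivD[OF assms(2) braid_invariant_append_left[OF f] _ kl(2)] by simp
  also have "\<dots> = gr_eval f (gm_mult N A' B' k l)"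
    by (rule gr_eval_gm_mult[symmetric])
  finally show "gr_eval f (gm_mult N A B k l) = gr_eval f (gm_mult N A' B' k l)" .
qed

lemma gr_eval_phi_append:
  "k < N \<Longrightarrow> gr_eval f (phi N (u @ v) k l) = gr_eval f (gm_mult N (phi N u) (phi N v) k l)"
proof (induction u arbitrary: f k l)
  case Nil
  then show ?case by (simp add: gr_eval_gm_mult gr_eval_gm_one)
next
  case (Cons x u)
  have "gr_eval f (phi N ((x # u) @ v) k l)
      = (\<Sum>p<N. gr_eval (\<lambda>a. gr_eval (\<lambda>b. f (a @ b)) (phi N (u @ v) p l)) (phi_gen N x k p))"
    by (simp add: gr_eval_gm_mult)
  also have "\<dots> = (\<Sum>p<N. gr_eval (\<lambda>a. gr_eval (\<lambda>b. f (a @ b)) (gm_mult N (phi N u) (phi N v) p l))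
                     (phi_gen N x k p))"
    using Cons.IH by simp
  also have "\<dots> = gr_eval f (gm_mult N (phi_gen N x) (gm_mult N (phi N u) (phi N v)) k l)"
    by (simp add: gr_eval_gm_mult)
  also have "\<dots> = gr_eval f (gm_mult N (phi N (x # u)) (phi N v) k l)"
    by (simp add: gr_eval_gm_mult_assoc)
  finally show ?case .
qed

lemma gm_equiv_phi_append: "gm_equiv M N (phi N (u @ v)) (gm_mult N (phi N u) (phi N v))"
  by (simp add: gm_equiv_def gr_eval_phi_append)

section \<open>phi respects the braid relations\<close>

lemma sum_lessThan_delta: "a < (N::nat) \<Longrightarrow> (\<Sum>p<N. if p = a then X else 0) = (X::complex)"
  by (subst sum.delta) auto

lemma sum_lessThan_delta2:
  assumes "a \<noteq> b" "a < (N::nat)" "b < N"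
  shows "(\<Sum>p<N. if p = a then X else if p = b then Y else 0) = X + (Y::complex)"
proof -
  have "(\<Sum>p<N. if p = a then X else if p = b then Y else 0)
      = (\<Sum>p<N. (if p = a then X else 0) + (if p = b then Y else 0))"
    using assms by (intro sum.cong) auto
  also have "\<dots> = X + Y"
    using assms by (simp only: sum.distrib sum_lessThan_delta)
  finally show ?thesis .
qed

lemma gr_eval_phi_gen_pos_mult:
  assumes i: "1 \<le> i" "i < N" and k: "k < N"
  shows "gr_eval f (gm_mult N (phi_gen N (i, True)) B k l) =
   (if k = i - 1 then gr_eval (\<lambda>v. f ((i, True) # gword N i True @ v)) (B i l)
    else if k = i then gr_eval (\<lambda>v. f ((i, True) # v)) (B (i - 1) l)
                       + gr_eval (\<lambda>v. f ((i, True) # v)) (B i l)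
                       - gr_eval (\<lambda>v. f ((i, True) # gword N i True @ v)) (B i l)
    else gr_eval (\<lambda>v. f ((i, True) # v)) (B k l))"
proof -
  let ?T = "\<lambda>p. gr_eval (\<lambda>w. gr_eval (\<lambda>b. f ((i, True) # w @ b)) (B p l)) (Dmat N i k p)"
  have sum: "gr_eval f (gm_mult N (phi_gen N (i, True)) B k l) = (\<Sum>p<N. ?T p)"
    by (simp add: gr_eval_gm_mult phi_gen_def gr_eval_gr_lmul)
  have i': "i - 1 \<noteq> i" "i - 1 < N"
    using i by auto
  consider "k = i - 1" | "k = i" | "k \<noteq> i - 1" "k \<noteq> i" by blast
  then show ?thesis
  proof cases
    case 1
    then have "?T p = (if p = i then gr_eval (\<lambda>v. f ((i, True) # gword N i True @ v)) (B i l) else 0)" for p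
      using i by (auto simp: Dmat_def)
    then show ?thesis using sum 1 i i' by (simp add: sum_lessThan_delta)
  next
    case 2
    then have "?T p = (if p = i - 1 then gr_eval (\<lambda>v. f ((i, True) # v)) (B (i - 1) l)
        else if p = i then gr_eval (\<lambda>v. f ((i, True) # v)) (B i l)
                           - gr_eval (\<lambda>v. f ((i, True) # gword N i True @ v)) (B i l)
        else 0)" for p
      using i by (auto simp: Dmat_def)
    then show ?thesis using sum 2 i i' by (simp add: sum_lessThan_delta2)
  next
    case 3
    then have "?T p = (if p = k then gr_eval (\<lambda>v. f ((i, True) # v)) (B k l) else 0)" for p
      using i by (auto simp: Dmat_def)
    then show ?thesis using sum 3 k by (simp add: sum_lessThan_delta)
  qed
qed

lemma gr_eval_phi_gen_neg_mult:
  assumes i: "1 \<le> i" "i < N" and k: "k < N"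
  shows "gr_eval f (gm_mult N (phi_gen N (i, False)) B k l) =
   (if k = i - 1 then gr_eval (\<lambda>v. f ((i, False) # v)) (B (i - 1) l)
                     - gr_eval (\<lambda>v. f (gword N i False @ (i, False) # v)) (B (i - 1) l)
                     + gr_eval (\<lambda>v. f ((i, False) # v)) (B i l)
    else if k = i then gr_eval (\<lambda>v. f (gword N i False @ (i, False) # v)) (B (i - 1) l)
    else gr_eval (\<lambda>v. f ((i, False) # v)) (B k l))"
proof -
  let ?T = "\<lambda>p. gr_eval (\<lambda>w. gr_eval (\<lambda>b. f (w @ (i, False) # b)) (B p l)) (Dinv N i k p)"
  have sum: "gr_eval f (gm_mult N (phi_gen N (i, False)) B k l) = (\<Sum>p<N. ?T p)"
    by (simp add: gr_eval_gm_mult phi_gen_def gr_eval_gr_rmul)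
  have i': "i - 1 \<noteq> i" "i - 1 < N"
    using i by auto
  consider "k = i - 1" | "k = i" | "k \<noteq> i - 1" "k \<noteq> i" by blast
  then show ?thesis
  proof cases
    case 1
    then have "?T p = (if p = i - 1 then gr_eval (\<lambda>v. f ((i, False) # v)) (B (i - 1) l)
                         - gr_eval (\<lambda>v. f (gword N i False @ (i, False) # v)) (B (i - 1) l)
        else if p = i then gr_eval (\<lambda>v. f ((i, False) # v)) (B i l) else 0)" for p
      using i by (auto simp: Dinv_def)
    then show ?thesis using sum 1 i i' by (simp add: sum_lessThan_delta2)
  next
    case 2
    then have "?T p = (if p = i - 1 then gr_eval (\<lambda>v. f (gword N i False @ (i, False) # v)) (B (i - 1) l)
                       else 0)" for p
      using i by (auto simp: Dinv_def)
    then show ?thesis using sum 2 i i' by (simp add: sum_lessThan_delta)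
  next
    case 3
    then have "?T p = (if p = k then gr_eval (\<lambda>v. f ((i, False) # v)) (B k l) else 0)" for p
      using i by (auto simp: Dinv_def)
    then show ?thesis using sum 3 k by (simp add: sum_lessThan_delta)
  qed
qed

lemma gr_eval_phi_gen_pos_mult_cases:
  assumes "1 \<le> i" "i < N"
  shows "k = i - 1 \<Longrightarrow> gr_eval f (gm_mult N (phi_gen N (i, True)) B k l)
           = gr_eval (\<lambda>v. f ((i, True) # gword N i True @ v)) (B i l)"
    and "k = i \<Longrightarrow> gr_eval f (gm_mult N (phi_gen N (i, True)) B k l)
           = gr_eval (\<lambda>v. f ((i, True) # v)) (B (i - 1) l) + gr_eval (\<lambda>v. f ((i, True) # v)) (B i l)
             - gr_eval (\<lambda>v. f ((i, True) # gword N i True @ v)) (B i l)"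
    and "k < N \<Longrightarrow> k \<noteq> i - 1 \<Longrightarrow> k \<noteq> i \<Longrightarrow> gr_eval f (gm_mult N (phi_gen N (i, True)) B k l)
           = gr_eval (\<lambda>v. f ((i, True) # v)) (B k l)"
  using gr_eval_phi_gen_pos_mult[OF assms, of k f B l] assms by (simp_all split: if_splits)

lemma beq_gword_cancel:
  assumes "1 \<le> i" "i \<le> N"
  shows "beq (Suc N) (x @ gword N i b @ gword N i (\<not> b) @ y) (x @ y)"
proof (cases b)
  case True
  then show ?thesis
    using beq.ctxt[OF beq_append_inv_word[OF gword_bwords[OF assms, of True]], of x y]
    by (simp add: gword_False)
next
  case False
  then show ?thesis
    using beq.ctxt[OF beq_inv_word_append[OF gword_bwords[OF assms, of True]], of x y]
    by (simp add: gword_False)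
qed

lemma phi_cancel:
  assumes i: "1 \<le> i" "i < N"
  shows "gm_equiv (Suc N) N (phi N [(i, b), (i, \<not> b)]) (phi N [])"
  unfolding gm_equiv_def
proof (intro allI impI)
  fix f k l assume f: "braid_invariant (Suc N) f" and kl: "k < N" "l < N"
  have cancel: "f (x @ (i, c) # (i, \<not> c) # y) = f (x @ y)" for x y c
    by (rule braid_invariantD[OF f beq_delete_cancel]) (use i in auto)
  have c1: "f [(i, True), (i, False)] = f []" "f [(i, False), (i, True)] = f []"
    using cancel[of "[]" True "[]"] cancel[of "[]" False "[]"] by simp_all
  have c2: "f ((i, True) # gword N i True @ gword N i False @ [(i, False)]) = f []"
    using braid_invariantD[OF f beq_gword_cancel[of i N "[(i, True)]" True "[(i, False)]"]] c1 i
    by simp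
  have c3: "f (gword N i False @ (i, False) # (i, True) # gword N i True) = f []"
    using cancel[of "gword N i False" False "gword N i True"]
      braid_invariantD[OF f beq_gword_cancel[of i N "[]" False "[]"]] i
    by simp
  show "gr_eval f (phi N [(i, b), (i, \<not> b)] k l) = gr_eval f (phi N [] k l)"
    using i kl c1 c2 c3
    by (cases b; cases "l = i"; cases "l = i - 1"; cases "k = i"; cases "k = i - 1")
      (simp_all add: gr_eval_phi_gen_pos_mult gr_eval_phi_gen_neg_mult gr_eval_gm_one)
qed

lemma phi_comm:
  assumes i: "1 \<le> i" "i < N" and j: "1 \<le> j" "j < N" and ij: "i + 1 < j"
  shows "gm_equiv (Suc N) N (phi N [(i, True), (j, True)]) (phi N [(j, True), (i, True)])"
  unfolding gm_equiv_def
proof (intro allI impI)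
  fix f k l assume f: "braid_invariant (Suc N) f" and kl: "k < N" "l < N"
  let ?x = "gword N i True" and ?z = "gword N j True"
  have comm: "beq (Suc N) [(i, True), (j, True)] [(j, True), (i, True)]"
    using beq_far_commute[of i "Suc N" j] i j ij by simp
  have "beq (Suc N) ((i, True) # ?x @ [(j, True)]) ([(i, True), (j, True)] @ ?x)"
    using beq.ctxt[OF beq_gword_sigma_far[of i N j], of "[(i, True)]" "[]"] i j ij by simp
  also have "beq (Suc N) \<dots> ((j, True) # (i, True) # ?x)"
    using beq_append_right[OF comm, of ?x] by simp
  finally have e1: "f ((i, True) # ?x @ [(j, True)]) = f ((j, True) # (i, True) # ?x)"
    by (rule braid_invariantD[OF f])
  have "beq (Suc N) ((j, True) # ?z @ [(i, True)]) ([(j, True), (i, True)] @ ?z)"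
    using beq.ctxt[OF beq_gword_sigma_far[of j N i], of "[(j, True)]" "[]"] i j ij by simp
  also have "beq (Suc N) \<dots> ((i, True) # (j, True) # ?z)"
    using beq_append_right[OF beq.sym[OF comm], of ?z] by simp
  finally have e2: "f ((i, True) # (j, True) # ?z) = f ((j, True) # ?z @ [(i, True)])"
    by (rule braid_invariantD[OF f beq.sym])
  have e0: "f [(i, True), (j, True)] = f [(j, True), (i, True)]"
    by (rule braid_invariantD[OF f comm])
  consider "k = i - 1" | "k = i" | "k = j - 1" | "k = j" | "k \<noteq> i - 1" "k \<noteq> i" "k \<noteq> j - 1" "k \<noteq> j"
    by blast
  then show "gr_eval f (phi N [(i, True), (j, True)] k l) = gr_eval f (phi N [(j, True), (i, True)] k l)"
    using i j ij kl e0 e1 e2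
    by cases (simp_all add: gr_eval_phi_gen_pos_mult_cases gr_eval_gm_one split del: if_split)
qed

lemma beq_phi_braid_words:
  assumes "1 \<le> i" "Suc i < N"
  defines "x \<equiv> gword N i True" and "y \<equiv> gword N (Suc i) True"
    and "A \<equiv> (i, True)" and "B \<equiv> (Suc i, True)"
  shows "beq (Suc N) (A # B # y @ [A]) (B # y @ [A, B])"
    and "beq (Suc N) (A # B # A # x) (B # y @ [A, B])"
    and "beq (Suc N) (B # A # x @ B # y) (B # y @ A # B # y)"
    and "beq (Suc N) (A # x @ B # y @ [A]) (B # A # x @ B # y)"
proof -
  have g1: "beq (Suc N) (y @ [A]) (A # x)"
    using beq_gword_Suc_sigma[of i N] assms(1,2) by (simp add: x_def y_def A_def)
  have g2: "beq (Suc N) (x @ [A]) (A # x @ y @ gword N i False)"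
    using beq_gword_sigma[of i N] assms(1,2) by (simp add: x_def y_def A_def)
  have g3: "beq (Suc N) (x @ [B]) (B # x)"
    using beq_gword_sigma_far[of i N "Suc i"] assms(1,2) by (simp add: x_def B_def)
  have br: "beq (Suc N) [A, B, A] [B, A, B]"
    using beq.braid[of i "Suc N"] assms(1,2) by (simp add: A_def B_def)
  have BA: "beq (Suc N) (B # y @ [A, B]) (B # A # B # x)"
  proof -
    have "beq (Suc N) (B # y @ [A, B]) ([B] @ (A # x) @ [B])"
      using beq.ctxt[OF g1, of "[B]" "[B]"] by simp
    also have "beq (Suc N) \<dots> ([B, A] @ (B # x) @ [])"
      using beq.ctxt[OF g3, of "[B, A]" "[]"] by simp
    finally show ?thesis by simp
  qed
  have AB: "beq (Suc N) (A # B # A # x) (B # A # B # x)"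
    using beq_append_right[OF br, of x] by simp
  have ABA: "beq (Suc N) (A # B # A # x) (B # y @ [A, B])"
    using AB BA by (meson beq.trans beq.sym)
  then show "beq (Suc N) (A # B # A # x) (B # y @ [A, B])" .
  have "beq (Suc N) (A # B # y @ [A]) (A # B # A # x)"
    using beq.ctxt[OF g1, of "[A, B]" "[]"] by simp
  then show "beq (Suc N) (A # B # y @ [A]) (B # y @ [A, B])"
    using ABA by (rule beq.trans)
  show "beq (Suc N) (B # A # x @ B # y) (B # y @ A # B # y)"
    using beq.ctxt[OF beq.sym[OF g1], of "[B]" "B # y"] by simp
  have "beq (Suc N) (A # x @ B # y @ [A]) ((A # x @ [B]) @ (A # x) @ [])"
    using beq.ctxt[OF g1, of "A # x @ [B]" "[]"] by simp
  also have "beq (Suc N) \<dots> ([A] @ (B # x) @ A # x)"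
    using beq.ctxt[OF g3, of "[A]" "A # x"] by simp
  also have "beq (Suc N) \<dots> ([A, B] @ (A # x @ y @ gword N i False) @ x)"
    using beq.ctxt[OF g2, of "[A, B]" x] by simp
  also have "beq (Suc N) \<dots> ([A, B, A] @ x @ y)"
    using beq_gword_cancel[of i N "[A, B, A] @ x @ y" False "[]"] assms(1,2) by (simp add: x_def)
  also have "beq (Suc N) \<dots> ([B, A] @ (B # x) @ y)"
    using beq_append_right[OF br, of "x @ y"] by simp
  also have "beq (Suc N) \<dots> ([B, A] @ (x @ [B]) @ y)"
    by (rule beq.ctxt[OF beq.sym[OF g3]])
  finally show "beq (Suc N) (A # x @ B # y @ [A]) (B # A # x @ B # y)"
    by simp
qed

lemma phi_braid:
  assumes i: "1 \<le> i" "Suc i < N"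
  shows "gm_equiv (Suc N) N (phi N [(i, True), (Suc i, True), (i, True)])
           (phi N [(Suc i, True), (i, True), (Suc i, True)])"
  unfolding gm_equiv_def
proof (intro allI impI)
  fix f k l assume f: "braid_invariant (Suc N) f" and kl: "k < N" "l < N"
  note words = beq_phi_braid_words[OF i, THEN braid_invariantD[OF f]]
  have e0: "f [(i, True), (Suc i, True), (i, True)] = f [(Suc i, True), (i, True), (Suc i, True)]"
    using braid_invariantD[OF f beq.braid[of i "Suc N"]] i by simp
  consider "k = i - 1" | "k = i" | "k = Suc i" | "k \<noteq> i - 1" "k \<noteq> i" "k \<noteq> Suc i"
    by blast
  then show "gr_eval f (phi N [(i, True), (Suc i, True), (i, True)] k l)
           = gr_eval f (phi N [(Suc i, True), (i, True), (Suc i, True)] k l)"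
    using i kl e0 words
    by cases (simp_all add: gr_eval_phi_gen_pos_mult_cases gr_eval_gm_one split del: if_split)
qed

lemma phi_beq: "beq N u v \<Longrightarrow> gm_equiv (Suc N) N (phi N u) (phi N v)"
proof (induction rule: beq.induct)
  case (refl u)
  show ?case by (rule gm_equiv_refl)
next
  case (sym u v)
  show ?case using sym.IH by (rule gm_equiv_sym)
next
  case (trans u v w)
  show ?case using trans.IH by (rule gm_equiv_trans)
next
  case (ctxt u v x y)
  have "gm_equiv (Suc N) N (phi N (x @ u @ y)) (gm_mult N (phi N x) (gm_mult N (phi N u) (phi N y)))"
    by (rule gm_equiv_trans[OF gm_equiv_phi_append gm_equiv_mult[OF gm_equiv_refl gm_equiv_phi_append]])
  also have "gm_equiv (Suc N) N \<dots> (gm_mult N (phi N x) (gm_mult N (phi N v) (phi N y)))"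
    by (rule gm_equiv_mult[OF gm_equiv_refl gm_equiv_mult[OF ctxt.IH gm_equiv_refl]])
  also have "gm_equiv (Suc N) N \<dots> (phi N (x @ v @ y))"
    by (rule gm_equiv_sym,
        rule gm_equiv_trans[OF gm_equiv_phi_append gm_equiv_mult[OF gm_equiv_refl gm_equiv_phi_append]])
  finally show ?case .
next
  case (cancel i b)
  then show ?case by (rule phi_cancel)
next
  case (comm i j)
  then show ?case by (intro phi_comm) auto
next
  case (braid i)
  then show ?case using phi_braid[of i N] by simp
qed

section \<open>The construction tau^+ yields representations\<close>

lemma bperm_append: "bperm (u @ v) = bperm u \<circ> bperm v"
  by (induction u) auto

lemma swp_swp [simp]: "swp i (swp i x) = x"
  by (simp add: swp_def)

lemma inj_bperm: "inj (bperm w)"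
proof (induction w)
  case (Cons x w)
  have "inj (swp (fst x))"
    by (metis injI swp_swp)
  from inj_compose[OF this Cons.IH] show ?case by (simp add: comp_def)
qed simp

lemma bperm_append_inv_word: "bperm (w @ inv_word w) = id"
proof (induction w)
  case (Cons a w)
  have "bperm ((a # w) @ inv_word (a # w)) = swp (fst a) \<circ> bperm (w @ inv_word w) \<circ> swp (fst a)"
    by (simp add: bperm_append comp_assoc inv_letter_def)
  with Cons.IH show ?case by (simp add: fun_eq_iff)
qed simp

lemma bperm_gword: "bperm (gword N i b) = id"
proof -
  have "bperm (gword N i b) = bperm (gconj N i @ inv_word (gconj N i))"
    by (simp add: gword_gconj bperm_append fun_eq_iff)
  then show ?thesis by (simp add: bperm_append_inv_word)
qed

lemma beq_bperm:
  "beq M u v \<Longrightarrow> bperm u = bperm v \<and> (u \<in> bwords M \<longleftrightarrow> v \<in> bwords M)"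
proof (induction rule: beq.induct)
  case (ctxt u v x y)
  then show ?case by (simp add: bperm_append)
next
  case (cancel i b)
  then show ?case by (simp add: fun_eq_iff)
next
  case (comm i j)
  then show ?case by (auto simp: fun_eq_iff swp_def)
next
  case (braid i)
  then show ?case by (auto simp: fun_eq_iff swp_def)
qed auto

lemma Bnj_Nil [simp]: "[] \<in> Bnj n j"
  by (simp add: Bnj_def)

lemma Bnj_append:
  assumes "u \<in> Bnj n j" "v \<in> Bnj n j"
  shows "u @ v \<in> Bnj n j"
proof -
  have "bperm (u @ v) ` {1..n} = bperm u ` (bperm v ` {1..n})"
    by (simp add: bperm_append image_comp)
  then show ?thesis using assms by (simp add: Bnj_def)
qed

lemma Bnj_beq: "beq (n + j) u v \<Longrightarrow> u \<in> Bnj n j \<Longrightarrow> v \<in> Bnj n j"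
  using beq_bperm[of "n + j" u v] by (simp add: Bnj_def)

lemma phi_gen_words:
  "(a, u) \<in> set (phi_gen N x k p) \<Longrightarrow>
   u = [x] \<or> u = x # gword N (fst x) True \<or> u = gword N (fst x) False @ [x]"
  by (cases x; cases "snd x")
    (auto simp: phi_gen_def gr_lmul_def gr_rmul_def Dmat_def Dinv_def split: if_splits)

lemma phi_words:
  assumes "\<beta> \<in> bwords N" "(c, w) \<in> set (phi N \<beta> k l)"
  shows "w \<in> bwords (Suc N) \<and> bperm w = bperm \<beta>"
  using assms
proof (induction \<beta> arbitrary: c w k l)
  case Nil
  then show ?case by (auto simp: gm_one_def split: if_splits)
next
  case (Cons x \<beta>)
  obtain p a u b v where
    uv: "(a, u) \<in> set (phi_gen N x k p)" "(b, v) \<in> set (phi N \<beta> p l)" "w = u @ v"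
    using Cons.prems(2) by (auto simp: gm_mult_def gr_mult_def)
  have v: "v \<in> bwords (Suc N) \<and> bperm v = bperm \<beta>"
    using Cons.IH[OF _ uv(2)] Cons.prems by simp
  have "u \<in> bwords (Suc N) \<and> bperm u = swp (fst x)"
    using phi_gen_words[OF uv(1)] Cons.prems gword_bwords[of "fst x" N]
    by (auto simp: bperm_append bperm_gword)
  with v uv(3) show ?case by (simp add: bperm_append)
qed

lemma phi_Bnj_words:
  "\<beta> \<in> Bnj n j \<Longrightarrow> (c, w) \<in> set (phi (n + j) \<beta> k l) \<Longrightarrow> w \<in> Bnj n (Suc j)"
  using phi_words[of \<beta> "n + j" c w k l] by (simp add: Bnj_def)

lemma tau_lin_index:
  assumes "\<And>c w. (c, w) \<in> set A \<Longrightarrow> \<tau> w \<in> carrier_mat d d"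
  shows "tau_lin d \<tau> A \<in> carrier_mat d d \<and>
    (\<forall>a<d. \<forall>b<d. tau_lin d \<tau> A $$ (a, b) = gr_eval (\<lambda>w. \<tau> w $$ (a, b)) A)"
  using assms
proof (induction A)
  case (Cons x A)
  obtain c w where x: "x = (c, w)" by (cases x)
  have "\<tau> w \<in> carrier_mat d d"
    using Cons.prems x by auto
  moreover have "tau_lin d \<tau> A \<in> carrier_mat d d \<and>
    (\<forall>a<d. \<forall>b<d. tau_lin d \<tau> A $$ (a, b) = gr_eval (\<lambda>w. \<tau> w $$ (a, b)) A)"
    using Cons by auto
  ultimately show ?case by (auto simp: x tau_lin_def)
qed (simp add: tau_lin_def)

lemma index_mult_mat_sum:
  "A \<in> carrier_mat m m \<Longrightarrow> B \<in> carrier_mat m m \<Longrightarrow> x < m \<Longrightarrow> y < m \<Longrightarrow>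
   (A * B) $$ (x, y) = (\<Sum>e<m. A $$ (x, e) * B $$ (e, y))"
  by (auto simp: scalar_prod_def atLeast0LessThan intro!: sum.cong)

lemma sum_lessThan_mult_blocks:
  fixes g :: "nat \<Rightarrow> 'a::comm_monoid_add"
  shows "(\<Sum>c<N * d. g c) = (\<Sum>p<N. \<Sum>e<d. g (p * d + e))"
proof -
  have "(\<Sum>c<N * d. g c) = (\<Sum>p<N. sum g {p * d..<p * d + d})"
    using sum.nat_group[of g d N] by simp
  also have "\<dots> = (\<Sum>p<N. \<Sum>e<d. g (p * d + e))"
  proof (rule sum.cong[OF HOL.refl])
    fix p
    show "sum g {p * d..<p * d + d} = (\<Sum>e<d. g (p * d + e))"
      by (rule sum.reindex_bij_witness[of _ "\<lambda>e. p * d + e" "\<lambda>c. c - p * d"]) auto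
  qed
  finally show ?thesis .
qed

text \<open>
  Extending the entries of tau by 0 outside G gives functions on all words, which are
  braid-invariant as soon as G is closed under braid equivalence.
\<close>
definition rep_coeff ::
    "bword set \<Rightarrow> (bword \<Rightarrow> complex mat) \<Rightarrow> nat \<Rightarrow> nat \<Rightarrow> bword \<Rightarrow> complex" where
  "rep_coeff G \<tau> x y w = (if w \<in> G then \<tau> w $$ (x, y) else 0)"

text \<open>In the application, G = B_{n,j} inside B_{n+j} (so N = n+j-1) and H = B_{n,j-1}.\<close>
locale plus_construction =
  fixes N d :: nat and G H :: "bword set" and \<tau> :: "bword \<Rightarrow> complex mat"
  assumes tau: "is_rep G (Suc N) d \<tau>"
    and G_append: "\<And>u v. u \<in> G \<Longrightarrow> v \<in> G \<Longrightarrow> u @ v \<in> G"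
    and G_beq: "\<And>u v. beq (Suc N) u v \<Longrightarrow> u \<in> G \<Longrightarrow> v \<in> G"
    and H_Nil: "[] \<in> H"
    and H_append: "\<And>u v. u \<in> H \<Longrightarrow> v \<in> H \<Longrightarrow> u @ v \<in> H"
    and phi_entries: "\<And>\<beta> c w k l. \<beta> \<in> H \<Longrightarrow> (c, w) \<in> set (phi N \<beta> k l) \<Longrightarrow> w \<in> G"
begin

lemma tau_carrier: "w \<in> G \<Longrightarrow> \<tau> w \<in> carrier_mat d d"
  using tau by (simp add: is_rep_def)

lemma rep_coeff_braid_invariant: "braid_invariant (Suc N) (rep_coeff G \<tau> x y)"
  unfolding braid_invariant_def
proof (intro allI impI)
  fix u v assume uv: "beq (Suc N) u v"
  then have "u \<in> G \<longleftrightarrow> v \<in> G"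
    using G_beq beq.sym by blast
  then show "rep_coeff G \<tau> x y u = rep_coeff G \<tau> x y v"
    using tau uv by (auto simp: rep_coeff_def is_rep_def)
qed

lemma rep_coeff_append:
  assumes "u \<in> G" "v \<in> G" "x < d" "y < d"
  shows "rep_coeff G \<tau> x y (u @ v) = (\<Sum>e<d. rep_coeff G \<tau> x e u * rep_coeff G \<tau> e y v)"
proof -
  have "\<tau> (u @ v) = \<tau> u * \<tau> v"
    using tau assms(1,2) by (simp add: is_rep_def)
  then show ?thesis
    using index_mult_mat_sum[OF tau_carrier tau_carrier, of u v x y] assms G_append[OF assms(1,2)]
    by (simp add: rep_coeff_def)
qed

lemma gr_eval_rep_coeff_append:
  assumes "\<And>c w. (c, w) \<in> set A \<Longrightarrow> w \<in> G" "\<And>c w. (c, w) \<in> set B \<Longrightarrow> w \<in> G"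
    and "x < d" "y < d"
  shows "gr_eval (\<lambda>u. gr_eval (\<lambda>v. rep_coeff G \<tau> x y (u @ v)) B) A
       = (\<Sum>e<d. gr_eval (rep_coeff G \<tau> x e) A * gr_eval (rep_coeff G \<tau> e y) B)"
proof -
  have "gr_eval (\<lambda>u. gr_eval (\<lambda>v. rep_coeff G \<tau> x y (u @ v)) B) A
      = gr_eval (\<lambda>u. gr_eval (\<lambda>v. \<Sum>e<d. rep_coeff G \<tau> x e u * rep_coeff G \<tau> e y v) B) A"
    using assms rep_coeff_append by (intro gr_eval_cong) auto
  then show ?thesis
    by (simp add: gr_eval_sum gr_eval_mult_left gr_eval_mult_right)
qed

lemma rep_plus_index:
  assumes "\<beta> \<in> H" "a < N * d" "b < N * d"
  shows "rep_plus N d \<tau> \<beta> $$ (a, b)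
           = gr_eval (rep_coeff G \<tau> (a mod d) (b mod d)) (phi N \<beta> (a div d) (b div d))"
proof -
  have "0 < d"
    using assms(2) by (cases d) auto
  then have d: "a mod d < d" "b mod d < d"
    by simp_all
  have words: "(c, w) \<in> set (phi N \<beta> (a div d) (b div d)) \<Longrightarrow> w \<in> G" for c w
    using phi_entries[OF assms(1)] by blast
  have "tau_lin d \<tau> (phi N \<beta> (a div d) (b div d)) $$ (a mod d, b mod d)
      = gr_eval (\<lambda>w. \<tau> w $$ (a mod d, b mod d)) (phi N \<beta> (a div d) (b div d))"
    using tau_lin_index[of "phi N \<beta> (a div d) (b div d)" \<tau> d] tau_carrier words d by blast
  also have "\<dots> = gr_eval (rep_coeff G \<tau> (a mod d) (b mod d)) (phi N \<beta> (a div d) (b div d))"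
    by (rule gr_eval_cong) (use words in \<open>auto simp: rep_coeff_def\<close>)
  finally show ?thesis
    using assms by (simp add: rep_plus_def)
qed

lemma rep_plus_Nil: "rep_plus N d \<tau> [] = 1\<^sub>m (N * d)"
proof (rule eq_matI)
  fix a b assume "a < dim_row (1\<^sub>m (N * d))" "b < dim_col (1\<^sub>m (N * d))"
  then have ab: "a < N * d" "b < N * d" by auto
  then have d: "0 < d" by (cases d) auto
  have unit: "\<tau> [] = 1\<^sub>m d" "[] \<in> G"
    using tau phi_entries[OF H_Nil, of 1 "[]" 0 0] by (simp_all add: is_rep_def gm_one_def)
  have "a = b \<longleftrightarrow> a div d = b div d \<and> a mod d = b mod d"
    by (metis div_mult_mod_eq)
  then have "of_bool (a div d = b div d) * rep_coeff G \<tau> (a mod d) (b mod d) [] = 1\<^sub>m (N * d) $$ (a, b)"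
    using ab d unit by (auto simp: rep_coeff_def)
  then show "rep_plus N d \<tau> [] $$ (a, b) = 1\<^sub>m (N * d) $$ (a, b)"
    using rep_plus_index[OF H_Nil ab] by (simp add: gr_eval_gm_one)
qed (auto simp: rep_plus_def)

lemma rep_plus_mult_index:
  assumes "u \<in> H" "v \<in> H" "a < N * d" "b < N * d"
  shows "(rep_plus N d \<tau> u * rep_plus N d \<tau> v) $$ (a, b)
    = (\<Sum>p<N. \<Sum>e<d. gr_eval (rep_coeff G \<tau> (a mod d) e) (phi N u (a div d) p)
                     * gr_eval (rep_coeff G \<tau> e (b mod d)) (phi N v p (b div d)))"
proof -
  have "(rep_plus N d \<tau> u * rep_plus N d \<tau> v) $$ (a, b)
      = (\<Sum>c<N * d. rep_plus N d \<tau> u $$ (a, c) * rep_plus N d \<tau> v $$ (c, b))"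
    by (rule index_mult_mat_sum) (use assms in \<open>auto simp: rep_plus_def\<close>)
  also have "\<dots> = (\<Sum>p<N. \<Sum>e<d.
      rep_plus N d \<tau> u $$ (a, p * d + e) * rep_plus N d \<tau> v $$ (p * d + e, b))"
    by (rule sum_lessThan_mult_blocks)
  also have "\<dots> = (\<Sum>p<N. \<Sum>e<d. gr_eval (rep_coeff G \<tau> (a mod d) e) (phi N u (a div d) p)
                     * gr_eval (rep_coeff G \<tau> e (b mod d)) (phi N v p (b div d)))"
  proof (rule sum.cong[OF HOL.refl], rule sum.cong[OF HOL.refl])
    fix p e assume p: "p \<in> {..<N}" and e: "e \<in> {..<d}"
    have "p * d + e < Suc p * d"
      using e by simp
    also have "\<dots> \<le> N * d"
      using p by (intro mult_le_mono1) simp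
    finally have "p * d + e < N * d" .
    moreover have "(p * d + e) div d = p" "(p * d + e) mod d = e"
      using e by auto
    ultimately show "rep_plus N d \<tau> u $$ (a, p * d + e) * rep_plus N d \<tau> v $$ (p * d + e, b)
      = gr_eval (rep_coeff G \<tau> (a mod d) e) (phi N u (a div d) p)
        * gr_eval (rep_coeff G \<tau> e (b mod d)) (phi N v p (b div d))"
      using rep_plus_index[OF assms(1,3)] rep_plus_index[OF assms(2) _ assms(4)] by simp
  qed
  finally show ?thesis .
qed

lemma rep_plus_append:
  assumes uv: "u \<in> H" "v \<in> H"
  shows "rep_plus N d \<tau> (u @ v) = rep_plus N d \<tau> u * rep_plus N d \<tau> v"
proof (rule eq_matI)
  fix a b assume "a < dim_row (rep_plus N d \<tau> u * rep_plus N d \<tau> v)"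
    "b < dim_col (rep_plus N d \<tau> u * rep_plus N d \<tau> v)"
  then have ab: "a < N * d" "b < N * d" by (auto simp: rep_plus_def)
  then have "0 < d" by (cases d) auto
  with ab have idx: "a div d < N" "b div d < N" "a mod d < d" "b mod d < d"
    by (auto simp: less_mult_imp_div_less)
  have "rep_plus N d \<tau> (u @ v) $$ (a, b)
      = gr_eval (rep_coeff G \<tau> (a mod d) (b mod d)) (phi N (u @ v) (a div d) (b div d))"
    by (rule rep_plus_index[OF H_append[OF uv] ab])
  also have "\<dots> = gr_eval (rep_coeff G \<tau> (a mod d) (b mod d))
                     (gm_mult N (phi N u) (phi N v) (a div d) (b div d))"
    using gr_eval_phi_append idx by blast
  also have "\<dots> = (\<Sum>p<N. gr_eval (\<lambda>x. gr_eval (\<lambda>y. rep_coeff G \<tau> (a mod d) (b mod d) (x @ y))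
                                  (phi N v p (b div d))) (phi N u (a div d) p))"
    by (rule gr_eval_gm_mult)
  also have "\<dots> = (rep_plus N d \<tau> u * rep_plus N d \<tau> v) $$ (a, b)"
    unfolding rep_plus_mult_index[OF uv ab]
    by (intro sum.cong[OF HOL.refl] gr_eval_rep_coeff_append) (use uv idx phi_entries in blast)+
  finally show "rep_plus N d \<tau> (u @ v) $$ (a, b) = (rep_plus N d \<tau> u * rep_plus N d \<tau> v) $$ (a, b)" .
qed (auto simp: rep_plus_def)

lemma rep_plus_beq:
  assumes "u \<in> H" "v \<in> H" "beq N u v"
  shows "rep_plus N d \<tau> u = rep_plus N d \<tau> v"
proof (rule eq_matI)
  fix a b assume "a < dim_row (rep_plus N d \<tau> v)" "b < dim_col (rep_plus N d \<tau> v)"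
  then have ab: "a < N * d" "b < N * d" by (auto simp: rep_plus_def)
  then show "rep_plus N d \<tau> u $$ (a, b) = rep_plus N d \<tau> v $$ (a, b)"
    using rep_plus_index[OF assms(1) ab] rep_plus_index[OF assms(2) ab]
      gm_equivD[OF phi_beq[OF assms(3)] rep_coeff_braid_invariant]
    by (simp add: less_mult_imp_div_less)
qed (auto simp: rep_plus_def)

lemma rep_plus_is_rep: "is_rep H N (N * d) (rep_plus N d \<tau>)"
proof -
  have "rep_plus N d \<tau> w \<in> carrier_mat (N * d) (N * d)" for w
    by (simp add: rep_plus_def)
  with rep_plus_Nil rep_plus_append rep_plus_beq show ?thesis
    by (simp add: is_rep_def)
qed

end

lemma iter_plus_is_rep:
  "is_rep (Bnj n j) (n + j) d \<tau> \<Longrightarrow>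
   fst (iter_plus n d \<tau> j) = d * (\<Prod>i<j. n + i) \<and>
   is_rep (Bnj n 0) n (fst (iter_plus n d \<tau> j)) (snd (iter_plus n d \<tau> j))"
proof (induction j arbitrary: d \<tau>)
  case (Suc j)
  interpret plus_construction "n + j" d "Bnj n (Suc j)" "Bnj n j" \<tau>
    by unfold_locales
      (use Suc.prems Bnj_beq[of n "Suc j"] in \<open>auto intro: Bnj_append phi_Bnj_words\<close>)
  have "d * (\<Prod>i<Suc j. n + i) = (n + j) * d * (\<Prod>i<j. n + i)"
    by (simp add: algebra_simps)
  then show ?case
    using Suc.IH[OF rep_plus_is_rep] by (metis iter_plus.simps(2))
qed simp

section \<open>Forgetting the first n strands\<close>

text \<open>
  A predicate h on positions marks the strands to be forgotten, and is transported along the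
  word (after a letter sigma_k it becomes h o swp k). A letter between two kept strands becomes
  a letter at the rank of its position among the kept positions; a letter between a forgotten
  and a kept strand is a signed crossing.
\<close>
fun light_rank :: "(nat \<Rightarrow> bool) \<Rightarrow> nat \<Rightarrow> nat" where
  "light_rank h 0 = 0"
| "light_rank h (Suc p) = light_rank h p + (if h (Suc p) then 0 else 1)"

fun light_word :: "(nat \<Rightarrow> bool) \<Rightarrow> bword \<Rightarrow> bword" where
  "light_word h [] = []"
| "light_word h (x # w) =
     (if \<not> h (fst x) \<and> \<not> h (Suc (fst x)) then [(light_rank h (fst x), snd x)] else [])
     @ light_word (h \<circ> swp (fst x)) w"

fun mixed_crossings :: "(nat \<Rightarrow> bool) \<Rightarrow> bword \<Rightarrow> int" where
  "mixed_crossings h [] = 0"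
| "mixed_crossings h (x # w) =
     (if h (fst x) \<noteq> h (Suc (fst x)) then (if snd x then 1 else -1) else 0)
     + mixed_crossings (h \<circ> swp (fst x)) w"

lemma swp_simps [simp]: "swp k k = Suc k" "swp k (Suc k) = k"
  by (auto simp: swp_def)

lemma swp_other: "x \<noteq> k \<Longrightarrow> x \<noteq> Suc k \<Longrightarrow> swp k x = x"
  by (auto simp: swp_def)

lemma light_rank_cong:
  "(\<And>q. 1 \<le> q \<Longrightarrow> q \<le> p \<Longrightarrow> g q = h q) \<Longrightarrow> light_rank g p = light_rank h p"
  by (induction p) auto

lemma light_rank_mono: "p \<le> q \<Longrightarrow> light_rank h p \<le> light_rank h q"
  by (induction q) (auto simp: le_Suc_eq)

lemma light_rank_swp:
  assumes "1 \<le> k" "p < k \<or> k < p"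
  shows "light_rank (h \<circ> swp k) p = light_rank h p"
  using assms(2)
proof (induction p)
  case (Suc p)
  obtain k0 where k0: "k = Suc k0"
    using assms(1) by (cases k) auto
  consider "Suc p < k" | "p = k" | "k < p"
    using Suc.prems by linarith
  then show ?case
  proof cases
    case 1
    then show ?thesis by (intro light_rank_cong) (auto simp: swp_def)
  next
    case 2
    have "light_rank (h \<circ> swp k) k0 = light_rank h k0"
      by (intro light_rank_cong) (auto simp: swp_def k0)
    then show ?thesis using 2 by (simp add: k0 comp_def)
  next
    case 3
    then show ?thesis using Suc.IH by (simp add: swp_other)
  qed
qed simp

lemma light_word_append: "light_word h (u @ v) = light_word h u @ light_word (h \<circ> bperm u) v"
  by (induction u arbitrary: h) (auto simp: comp_assoc)

lemma mixed_crossings_append: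
  "mixed_crossings h (u @ v) = mixed_crossings h u + mixed_crossings (h \<circ> bperm u) v"
  by (induction u arbitrary: h) (auto simp: comp_assoc)

lemma light_rank_bperm: "w \<in> bwords M \<Longrightarrow> light_rank (h \<circ> bperm w) M = light_rank h M"
proof (induction w arbitrary: h)
  case (Cons x w)
  have "light_rank (h \<circ> bperm (x # w)) M = light_rank ((h \<circ> swp (fst x)) \<circ> bperm w) M"
    by (simp add: comp_assoc)
  also have "\<dots> = light_rank (h \<circ> swp (fst x)) M"
    by (rule Cons.IH) (use Cons.prems in simp)
  also have "\<dots> = light_rank h M"
    using Cons.prems by (intro light_rank_swp) auto
  finally show ?case .
qed simp

lemma light_word_bwords:
  "light_rank h M = m \<Longrightarrow> w \<in> bwords M \<Longrightarrow> light_word h w \<in> bwords m"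
proof (induction w arbitrary: h)
  case (Cons x w)
  obtain k s where x: "x = (k, s)" by (cases x)
  have k: "1 \<le> k" "k < M" using Cons.prems x by auto
  have "light_word (h \<circ> swp k) w \<in> bwords m"
    using Cons light_rank_swp[of k M h] k x by simp
  moreover have "1 \<le> light_rank h k \<and> light_rank h k < m" if "\<not> h k" "\<not> h (Suc k)"
  proof -
    obtain k0 where k0: "k = Suc k0" using k by (cases k) auto
    have "light_rank h (Suc k) \<le> light_rank h M"
      using k by (intro light_rank_mono) simp
    then show ?thesis using that Cons.prems by (simp add: k0)
  qed
  ultimately show ?case by (auto simp: x)
qed simp

lemma light_word_cancel:
  assumes "1 \<le> i" "i < M" "light_rank h M = m"
  shows "beq m (light_word h [(i, b), (i, \<not> b)]) [] \<and> mixed_crossings h [(i, b), (i, \<not> b)] = 0"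
proof (cases "\<not> h i \<and> \<not> h (Suc i)")
  case True
  obtain i0 where i0: "i = Suc i0" using assms(1) by (cases i) auto
  have "light_rank (h \<circ> swp i) i0 = light_rank h i0"
    by (intro light_rank_cong) (auto simp: swp_def i0)
  then have "light_rank (h \<circ> swp i) i = light_rank h i"
    using True by (simp add: i0 swp_def)
  moreover have "light_rank h (Suc i) \<le> m"
    using assms light_rank_mono[of "Suc i" M h] by simp
  ultimately show ?thesis
    using True by (auto simp: i0 intro: beq.cancel)
qed (auto simp: beq.refl)

lemma light_word_comm:
  assumes "1 \<le> i" "i + 1 < j" "j < M" "light_rank h M = m"
  shows "beq m (light_word h [(i, True), (j, True)]) (light_word h [(j, True), (i, True)]) \<and>
         mixed_crossings h [(i, True), (j, True)] = mixed_crossings h [(j, True), (i, True)]"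
proof -
  have ranks: "light_rank (h \<circ> swp i) j = light_rank h j" "light_rank (h \<circ> swp j) i = light_rank h i"
    using assms by (auto intro: light_rank_swp)
  have h: "(h \<circ> swp i) j = h j" "(h \<circ> swp i) (Suc j) = h (Suc j)"
    "(h \<circ> swp j) i = h i" "(h \<circ> swp j) (Suc i) = h (Suc i)"
    using assms by (auto simp: swp_def)
  have "1 \<le> light_rank h i \<and> light_rank h i + 1 < light_rank h j \<and> light_rank h j < m"
    if "\<not> h i" "\<not> h (Suc i)" "\<not> h j" "\<not> h (Suc j)"
  proof -
    obtain i0 where i0: "i = Suc i0" using assms by (cases i) auto
    obtain j0 where j0: "j = Suc j0" using assms by (cases j) auto
    have "light_rank h (Suc i) \<le> light_rank h j0"
      using assms j0 by (intro light_rank_mono) simp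
    moreover have "light_rank h (Suc j) \<le> light_rank h M"
      using assms by (intro light_rank_mono) simp
    ultimately show ?thesis using that assms by (simp add: i0 j0)
  qed
  then show ?thesis
    using ranks h beq.comm[of _ m] by (auto simp: beq.refl)
qed

lemma light_word_braid:
  assumes "1 \<le> i" "i + 1 < M" "light_rank h M = m"
  shows "beq m (light_word h [(i, True), (i + 1, True), (i, True)])
               (light_word h [(i + 1, True), (i, True), (i + 1, True)]) \<and>
         mixed_crossings h [(i, True), (i + 1, True), (i, True)]
           = mixed_crossings h [(i + 1, True), (i, True), (i + 1, True)]"
proof -
  obtain i0 where i0: "i = Suc i0" using assms by (cases i) auto
  let ?L = "light_rank h i0"
  have ranks: "light_rank (h \<circ> swp i) i0 = ?L" "light_rank (h \<circ> swp i \<circ> swp (Suc i)) i0 = ?L"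
    "light_rank (h \<circ> swp (Suc i)) i0 = ?L" "light_rank (h \<circ> swp (Suc i) \<circ> swp i) i0 = ?L"
    by (intro light_rank_cong, simp add: swp_def i0)+
  have "light_rank h (Suc (Suc i)) \<le> m"
    using assms light_rank_mono[of "Suc (Suc i)" M h] by simp
  then show ?thesis
    using ranks beq.braid[of "Suc ?L" m]
    by (cases "h (Suc i0)"; cases "h (Suc (Suc i0))"; cases "h (Suc (Suc (Suc i0)))")
      (simp_all add: i0 beq.refl swp_def)
qed

lemma beq_light_word:
  "beq M u v \<Longrightarrow> light_rank h M = m \<Longrightarrow> u \<in> bwords M \<Longrightarrow>
   beq m (light_word h u) (light_word h v) \<and> mixed_crossings h u = mixed_crossings h v"
proof (induction arbitrary: h rule: beq.induct)
  case (refl u)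
  show ?case by (simp add: beq.refl)
next
  case (sym u v)
  then show ?case using beq_bperm[OF sym.hyps] by (simp add: beq.sym)
next
  case (trans u v w)
  then show ?case using beq_bperm[OF trans.hyps(1)] by (auto intro: beq.trans)
next
  case (ctxt u v x y)
  have "light_rank (h \<circ> bperm x) M = m"
    using light_rank_bperm[of x M h] ctxt.prems by simp
  then have "beq m (light_word (h \<circ> bperm x) u) (light_word (h \<circ> bperm x) v) \<and>
             mixed_crossings (h \<circ> bperm x) u = mixed_crossings (h \<circ> bperm x) v"
    using ctxt.IH ctxt.prems by simp
  then show ?case
    using beq_bperm[OF ctxt.hyps] by (simp add: light_word_append mixed_crossings_append comp_assoc beq.ctxt)
next
  case (cancel i b)
  then show ?case using light_word_cancel[of i M h m b] by simp
next
  case (comm i j)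
  then show ?case using light_word_comm[of i j M h m] by simp
next
  case (braid i)
  then show ?case using light_word_braid[of i M h m] by simp
qed

definition first_strands :: "nat \<Rightarrow> nat \<Rightarrow> bool" where
  "first_strands n p \<longleftrightarrow> 1 \<le> p \<and> p \<le> n"

definition forget_rep ::
    "nat \<Rightarrow> complex \<Rightarrow> (bword \<Rightarrow> complex mat) \<Rightarrow> bword \<Rightarrow> complex mat" where
  "forget_rep n q \<rho> w =
     power_int (csqrt q) (mixed_crossings (first_strands n) w) \<cdot>\<^sub>m \<rho> (light_word (first_strands n) w)"

lemma light_rank_first_strands: "light_rank (first_strands n) p = p - n"
  by (induction p) (auto simp: first_strands_def)

lemma first_strands_bperm: "u \<in> Bnj n j \<Longrightarrow> first_strands n \<circ> bperm u = first_strands n"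
  using inj_image_mem_iff[OF inj_bperm, of u _ "{1..n}"]
  by (auto simp: Bnj_def first_strands_def fun_eq_iff)

lemma one_smult_mat: "A \<in> carrier_mat d d \<Longrightarrow> (1::complex) \<cdot>\<^sub>m A = A"
  by (intro eq_matI) auto

lemma smult_mult_smult_mat:
  assumes "A \<in> carrier_mat d d" "B \<in> carrier_mat d d"
  shows "((a::complex) \<cdot>\<^sub>m A) * (b \<cdot>\<^sub>m B) = (a * b) \<cdot>\<^sub>m (A * B)"
  using assms by (intro eq_matI) (auto simp: mult_smult_assoc_mat mult_smult_distrib)

context
  fixes n m d :: nat and q :: complex and \<rho> :: "bword \<Rightarrow> complex mat"
  assumes rho: "is_rep (bwords m) m d \<rho>" and q: "q \<noteq> 0"
begin

lemma light_word_first_strands_bwords: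
  "w \<in> Bnj n m \<Longrightarrow> light_word (first_strands n) w \<in> bwords m"
  using light_word_bwords[of "first_strands n" "n + m" m w] by (simp add: Bnj_def light_rank_first_strands)

lemma forget_rep_append:
  assumes "u \<in> Bnj n m" "v \<in> Bnj n m"
  shows "forget_rep n q \<rho> (u @ v) = forget_rep n q \<rho> u * forget_rep n q \<rho> v"
proof -
  let ?h = "first_strands n"
  have "\<rho> (light_word ?h (u @ v)) = \<rho> (light_word ?h u) * \<rho> (light_word ?h v)"
    using rho light_word_first_strands_bwords assms
    by (simp add: is_rep_def light_word_append first_strands_bperm)
  moreover have "\<rho> (light_word ?h u) \<in> carrier_mat d d" "\<rho> (light_word ?h v) \<in> carrier_mat d d"
    using rho light_word_first_strands_bwords assms by (auto simp: is_rep_def)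
  ultimately show ?thesis
    using assms q
    by (simp add: forget_rep_def mixed_crossings_append first_strands_bperm power_int_add smult_mult_smult_mat)
qed

lemma forget_rep_is_rep: "is_rep (Bnj n m) (n + m) d (forget_rep n q \<rho>)"
proof -
  have carrier: "forget_rep n q \<rho> w \<in> carrier_mat d d" if "w \<in> Bnj n m" for w
    using rho light_word_first_strands_bwords[OF that] by (simp add: is_rep_def forget_rep_def)
  have "forget_rep n q \<rho> [] = 1\<^sub>m d"
    using rho by (simp add: is_rep_def forget_rep_def one_smult_mat[OF one_carrier_mat])
  moreover have "forget_rep n q \<rho> u = forget_rep n q \<rho> v"
    if "u \<in> Bnj n m" "v \<in> Bnj n m" "beq (n + m) u v" for u v
  proof -
    have "beq m (light_word (first_strands n) u) (light_word (first_strands n) v) \<and>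
          mixed_crossings (first_strands n) u = mixed_crossings (first_strands n) v"
      using beq_light_word[OF that(3), of "first_strands n" m] that(1)
      by (simp add: Bnj_def light_rank_first_strands)
    with rho light_word_first_strands_bwords[OF that(1)] light_word_first_strands_bwords[OF that(2)]
    show ?thesis by (simp add: is_rep_def forget_rep_def)
  qed
  ultimately show ?thesis
    using carrier forget_rep_append by (simp add: is_rep_def)
qed

lemma forget_rep_rho_prime_props:
  assumes "1 \<le> n"
  shows "rho_prime_props n m d q \<rho> (forget_rep n q \<rho>)"
proof -
  have unit: "\<rho> [] = 1\<^sub>m d"
    using rho by (simp add: is_rep_def)
  have "forget_rep n q \<rho> [(n, True), (n, True)] = q \<cdot>\<^sub>m 1\<^sub>m d"
    using assms q by (simp add: forget_rep_def first_strands_def unit power2_eq_square[symmetric])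
  moreover have "forget_rep n q \<rho> [(i, True)] = 1\<^sub>m d" if "i \<in> {1..<n}" for i
    using that by (auto simp: forget_rep_def first_strands_def unit one_smult_mat[OF one_carrier_mat])
  moreover have "forget_rep n q \<rho> [(n + i, True)] = \<rho> [(i, True)]" if "i \<in> {1..<m}" for i
    using that rho
    by (auto simp: forget_rep_def first_strands_def light_rank_first_strands one_smult_mat is_rep_def)
  ultimately show ?thesis
    using forget_rep_is_rep by (simp add: rho_prime_props_def)
qed

end

theorem theorem5p3:
  fixes n m d :: nat and q :: complex and \<rho> :: "bword \<Rightarrow> complex mat"
  assumes "n \<ge> 2" and "m \<ge> 1" and "q \<noteq> 0"
    and "is_rep (bwords m) m d \<rho>"
  shows "(\<exists>\<rho>'. rho_prime_props n m d q \<rho> \<rho>') \<and>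
         (\<forall>\<rho>'. rho_prime_props n m d q \<rho> \<rho>' \<longrightarrow>
            fst (iter_plus n d \<rho>' m) = d * (\<Prod>i<m. n + i) \<and>
            is_rep (Bnj n 0) n (d * (\<Prod>i<m. n + i)) (snd (iter_plus n d \<rho>' m)))"
proof (intro conjI allI impI)
  have "1 \<le> n"
    using assms(1) by simp
  then show "\<exists>\<rho>'. rho_prime_props n m d q \<rho> \<rho>'"
    using forget_rep_rho_prime_props[OF assms(4,3)] by blast
next
  fix \<rho>' assume "rho_prime_props n m d q \<rho> \<rho>'"
  then have "is_rep (Bnj n m) (n + m) d \<rho>'"
    by (simp add: rho_prime_props_def)
  then have dim: "fst (iter_plus n d \<rho>' m) = d * (\<Prod>i<m. n + i)"
    and rep: "is_rep (Bnj n 0) n (fst (iter_plus n d \<rho>' m)) (snd (iter_plus n d \<rho>' m))"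
    using iter_plus_is_rep by blast+
  show "fst (iter_plus n d \<rho>' m) = d * (\<Prod>i<m. n + i)"
    by (rule dim)
  show "is_rep (Bnj n 0) n (d * (\<Prod>i<m. n + i)) (snd (iter_plus n d \<rho>' m))"
    using rep by (simp only: dim)
qed

end
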